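(* Let $M$ be an $\mathfrak{S}_2$-module, where $\mathfrak{S}_2:=\mathbb{Z}[s,t]/\bigl((1-s)(1-t),\,N(s)+N(t)-p\bigr)$, and write $s,t$ also for their actions on $M$. The following are equivalent: (1) $M$ is uniquely $p$-divisible; (2) $M$ is cohomologically trivial and $M=\ker(1-s)\oplus\ker(1-t)$; (3) $1-s$ restricts to an invertible map $\ker(1-t)\to\ker(1-t)$ and $1-t$ restricts to an invertible map $\ker(1-s)\to\ker(1-s)$.
   Context: $p$ is a prime and $N(x)=1+x+\dots+x^{p-1}$. An $\mathfrak{S}_2$-module is cohomologically trivial if $\operatorname{im}(1-t)=\ker(1-s)$ and $\operatorname{im}(1-s)=\ker(1-t)$. Uniquely $p$-divisible: multiplication by $p$ is bijective. *)

theory Defs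
  imports "HOL-Computational_Algebra.Primes"
begin

definition additive :: "('m::ab_group_add \<Rightarrow> 'm) \<Rightarrow> bool" where
  "additive f \<longleftrightarrow> (\<forall>x y. f (x + y) = f x + f y)"

definition natmult :: "nat \<Rightarrow> 'm::ab_group_add \<Rightarrow> 'm" where
  "natmult n m = (\<Sum>i<n. m)"

definition Nop :: "nat \<Rightarrow> ('m::ab_group_add \<Rightarrow> 'm) \<Rightarrow> 'm \<Rightarrow> 'm" where
  "Nop p f m = (\<Sum>i<p. (f ^^ i) m)"

text \<open>A module over S_2 = Z[s,t]/((1-s)(1-t), N(s)+N(t)-p): an abelian group with two
  commuting additive endomorphisms s, t satisfying the defining relations.\<close>
definition S2_module :: "nat \<Rightarrow> ('m::ab_group_add \<Rightarrow> 'm) \<Rightarrow> ('m \<Rightarrow> 'm) \<Rightarrow> bool" where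
  "S2_module p s t \<longleftrightarrow> additive s \<and> additive t \<and> (\<forall>m. s (t m) = t (s m)) \<and>
     (\<forall>m. (m - s m) - t (m - s m) = 0) \<and>
     (\<forall>m. Nop p s m + Nop p t m = natmult p m)"

definition uniquely_divisible :: "nat \<Rightarrow> ('m::ab_group_add) itself \<Rightarrow> bool" where
  "uniquely_divisible p (_::'m itself) \<longleftrightarrow> bij (natmult p :: 'm \<Rightarrow> 'm)"

definition kerop :: "('m::ab_group_add \<Rightarrow> 'm) \<Rightarrow> 'm set" where
  "kerop f = {m. m - f m = 0}"

definition imop :: "('m::ab_group_add \<Rightarrow> 'm) \<Rightarrow> 'm set" where
  "imop f = range (\<lambda>m. m - f m)"

definition cohom_trivial :: "('m::ab_group_add \<Rightarrow> 'm) \<Rightarrow> ('m \<Rightarrow> 'm) \<Rightarrow> bool" where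
  "cohom_trivial s t \<longleftrightarrow> imop t = kerop s \<and> imop s = kerop t"

definition internal_direct_sum :: "'m::ab_group_add set \<Rightarrow> 'm set \<Rightarrow> bool" where
  "internal_direct_sum A B \<longleftrightarrow> (\<forall>m. \<exists>!ab. fst ab \<in> A \<and> snd ab \<in> B \<and> m = fst ab + snd ab)"

end

theory Submission
  imports Defs
begin

(* Write a = 1 - s and b = 1 - t, so that ab = 0, im a \<subseteq> ker b and im b \<subseteq> ker a.
   On ker b we have t = 1, hence N(t) = p and N(s) = 0 there. Telescoping gives
   p - N(s) = a g with g = N_0(s) + ... + N_(p-1)(s), so a acts on ker b as p up to the commuting
   operator g: if p is invertible, a is invertible on ker b, and symmetrically b on ker a.
   Conversely, on ker a we have N(t) = 0, hence t^p = 1; as p divides the inner binomial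
   coefficients, (t - 1)^p = t^p - 1 + pF = pF on ker a. So if b is invertible on ker a, p is
   injective on ker a and ker a \<subseteq> pM. Invertibility of a on ker b gives M = ker a + ker b
   (if a m = a v with v in ker b, then m - v is in ker a), invertibility of b on ker a gives
   ker a \<inter> ker b = 0, and p is then bijective on M = ker a \<oplus> ker b.
   Finally, once M = ker a + ker b, a maps ker b onto im a, injectively iff ker a \<inter> ker b = 0;
   this identifies condition (3) with condition (2). *)

lemma additive_add: "additive f \<Longrightarrow> f (x + y) = f x + f y"
  unfolding additive_def by blast

lemma additive_0: "additive f \<Longrightarrow> f 0 = 0"
  using additive_add[of f 0 0] by simp

lemma additive_uminus: "additive f \<Longrightarrow> f (- x) = - f x"
  using additive_add[of f x "- x"] additive_0[of f] by (simp add: eq_neg_iff_add_eq_0 add.commute)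

lemma additive_diff: "additive f \<Longrightarrow> f (x - y) = f x - f y"
  using additive_add[of f x "- y"] additive_uminus[of f y] by simp

lemma additive_sum: "additive f \<Longrightarrow> f (\<Sum>i\<in>A. g i) = (\<Sum>i\<in>A. f (g i))"
  by (induction A rule: infinite_finite_induct) (simp_all add: additive_0 additive_add)

lemma additive_natmult: "additive f \<Longrightarrow> f (natmult n x) = natmult n (f x)"
  unfolding natmult_def by (simp add: additive_sum)

lemma additive_funpow: "additive f \<Longrightarrow> additive (f ^^ n)"
  by (induction n) (simp_all add: additive_def)

lemma natmult_additive: "additive (natmult n)"
  unfolding additive_def natmult_def by (simp add: sum.distrib)

lemma natmult_0_left: "natmult 0 x = 0"
  unfolding natmult_def by simp

lemma natmult_Suc: "natmult (Suc n) x = natmult n x + x"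
  unfolding natmult_def by simp

lemma natmult_add_left: "natmult (m + n) x = natmult m x + natmult n x"
  by (induction n) (simp_all add: natmult_0_left natmult_Suc add.assoc)

lemma natmult_mult: "natmult (m * n) x = natmult m (natmult n x)"
  by (induction m) (simp_all add: natmult_0_left natmult_add_left natmult_Suc add.commute)

lemma funpow_commute: "(\<And>y. h (f y) = f (h y)) \<Longrightarrow> h ((f ^^ n) y) = (f ^^ n) (h y)"
  by (induction n) simp_all

lemma funpow_fixpoint: "f x = x \<Longrightarrow> (f ^^ n) x = x"
  by (induction n) simp_all

lemma Nop_fixpoint: "f x = x \<Longrightarrow> Nop n f x = natmult n x"
  unfolding Nop_def natmult_def by (simp add: funpow_fixpoint)

lemma Nop_commute: "additive h \<Longrightarrow> (\<And>y. h (f y) = f (h y)) \<Longrightarrow> h (Nop n f y) = Nop n f (h y)"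
  unfolding Nop_def by (simp add: additive_sum funpow_commute)

lemma Nop_telescope:
  assumes "additive f"
  shows "Nop n f y - f (Nop n f y) = y - (f ^^ n) y"
proof -
  have "f (Nop n f y) = (\<Sum>j<n. (f ^^ Suc j) y)"
    unfolding Nop_def by (simp add: additive_sum[OF assms])
  then show ?thesis
    unfolding Nop_def using sum_lessThan_telescope'[of "\<lambda>j. (f ^^ j) y" n]
    by (simp add: sum_subtractf del: funpow.simps)
qed

lemma sum_Nop_telescope:
  assumes "additive f"
  shows "(\<Sum>i<n. Nop i f y) - f (\<Sum>i<n. Nop i f y) = natmult n y - Nop n f y"
proof -
  have "(\<Sum>i<n. Nop i f y) - f (\<Sum>i<n. Nop i f y) = (\<Sum>i<n. y - (f ^^ i) y)"
    by (simp add: additive_sum[OF assms] sum_subtractf[symmetric] Nop_telescope[OF assms])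
  also have "\<dots> = natmult n y - Nop n f y"
    unfolding natmult_def Nop_def by (simp add: sum_subtractf)
  finally show ?thesis .
qed

lemma funpow_binomial:
  assumes c: "additive c"
  shows "((\<lambda>x. x + c x) ^^ n) x = (\<Sum>k\<le>n. natmult (n choose k) ((c ^^ k) x))"
proof (induction n)
  case 0
  show ?case by (simp add: natmult_def)
next
  case (Suc n)
  have "((\<lambda>x. x + c x) ^^ Suc n) x =
      (\<Sum>k\<le>n. natmult (n choose k) ((c ^^ k) x)) + (\<Sum>k\<le>n. natmult (n choose k) ((c ^^ Suc k) x))"
    using Suc.IH by (simp add: additive_sum[OF c] additive_natmult[OF c])
  also have "(\<Sum>k\<le>n. natmult (n choose k) ((c ^^ k) x)) =
      (\<Sum>k\<le>Suc n. natmult (n choose k) ((c ^^ k) x))"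
    by (simp add: natmult_0_left binomial_eq_0)
  also have "\<dots> = x + (\<Sum>k\<le>n. natmult (n choose Suc k) ((c ^^ Suc k) x))"
    by (subst sum.atMost_Suc_shift) (simp add: natmult_def)
  also have "x + (\<Sum>k\<le>n. natmult (n choose Suc k) ((c ^^ Suc k) x))
        + (\<Sum>k\<le>n. natmult (n choose k) ((c ^^ Suc k) x))
      = x + (\<Sum>k\<le>n. natmult (Suc n choose Suc k) ((c ^^ Suc k) x))"
    by (simp add: natmult_add_left sum.distrib add.assoc add.commute del: funpow.simps)
  also have "\<dots> = (\<Sum>k\<le>Suc n. natmult (Suc n choose k) ((c ^^ k) x))"
    by (subst sum.atMost_Suc_shift) (simp add: natmult_def del: funpow.simps)
  finally show ?case .
qed

lemma funpow_binomial_prime: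
  assumes p: "prime p" and c: "additive c"
  obtains F where "additive F" and "\<And>x. ((\<lambda>x. x + c x) ^^ p) x = x + (c ^^ p) x + natmult p (F x)"
proof -
  define F where "F x = (\<Sum>k\<in>{1..<p}. natmult ((p choose k) div p) ((c ^^ k) x))" for x
  have "additive F"
    unfolding additive_def F_def
    by (simp add: additive_add[OF additive_funpow[OF c]] natmult_additive[THEN additive_add] sum.distrib)
  moreover have "((\<lambda>x. x + c x) ^^ p) x = x + (c ^^ p) x + natmult p (F x)" for x
  proof -
    have p1: "1 < p"
      using p by (rule prime_gt_1_nat)
    then have split: "{..p} = insert 0 (insert p {1..<p})"
      by auto
    have "(\<Sum>k\<in>{1..<p}. natmult (p choose k) ((c ^^ k) x)) =
        (\<Sum>k\<in>{1..<p}. natmult p (natmult ((p choose k) div p) ((c ^^ k) x)))"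
      using p dvd_choose_prime[of _ p] by (intro sum.cong) (simp_all add: natmult_mult[symmetric])
    also have "\<dots> = natmult p (F x)"
      unfolding F_def by (simp add: additive_sum[OF natmult_additive])
    finally have "(\<Sum>k\<in>{1..<p}. natmult (p choose k) ((c ^^ k) x)) = natmult p (F x)" .
    then show ?thesis
      using p1 by (simp add: funpow_binomial[OF c] split natmult_def add.assoc)
  qed
  ultimately show thesis
    using that by blast
qed

lemma kerop_iff: "x \<in> kerop f \<longleftrightarrow> f x = x"
  unfolding kerop_def by auto

lemma zero_in_kerop: "additive f \<Longrightarrow> 0 \<in> kerop f"
  by (simp add: kerop_iff additive_0)

lemma kerop_diff: "additive f \<Longrightarrow> x \<in> kerop f \<Longrightarrow> y \<in> kerop f \<Longrightarrow> x - y \<in> kerop f"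
  by (simp add: kerop_iff additive_diff)

lemma kerop_natmult: "additive f \<Longrightarrow> x \<in> kerop f \<Longrightarrow> natmult n x \<in> kerop f"
  by (simp add: kerop_iff additive_natmult)

lemma inj_on_one_minus_kerop_iff:
  assumes s: "additive s" and t: "additive t"
  shows "inj_on (\<lambda>m. m - t m) (kerop s) \<longleftrightarrow> kerop s \<inter> kerop t = {0}"
proof
  assume inj: "inj_on (\<lambda>m. m - t m) (kerop s)"
  have "x = 0" if "x \<in> kerop s" "x \<in> kerop t" for x
    using inj_onD[OF inj _ that(1) zero_in_kerop[OF s]] that(2) by (simp add: kerop_iff additive_0[OF t])
  then show "kerop s \<inter> kerop t = {0}"
    using zero_in_kerop[OF s] zero_in_kerop[OF t] by blast
next
  assume disjoint: "kerop s \<inter> kerop t = {0}"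
  show "inj_on (\<lambda>m. m - t m) (kerop s)"
  proof (rule inj_onI)
    fix x y assume "x \<in> kerop s" "y \<in> kerop s" and eq: "x - t x = y - t y"
    then have "x - y \<in> kerop s"
      by (simp add: kerop_diff[OF s])
    moreover have "x - y \<in> kerop t"
      using eq by (simp add: kerop_iff additive_diff[OF t] algebra_simps)
    ultimately have "x - y \<in> kerop s \<inter> kerop t"
      by simp
    then show "x = y"
      using disjoint by simp
  qed
qed

lemma internal_direct_sum_iff:
  assumes "0 \<in> A" "0 \<in> B"
    and "\<And>x y. x \<in> A \<Longrightarrow> y \<in> A \<Longrightarrow> x - y \<in> A"
    and "\<And>x y. x \<in> B \<Longrightarrow> y \<in> B \<Longrightarrow> x - y \<in> B"
  shows "internal_direct_sum A B \<longleftrightarrow> (\<forall>m. \<exists>a\<in>A. \<exists>b\<in>B. m = a + b) \<and> A \<inter> B = {0}"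
proof
  assume ds: "internal_direct_sum A B"
  have "x = 0" if "x \<in> A" "x \<in> B" for x
  proof -
    have "\<exists>!ab. fst ab \<in> A \<and> snd ab \<in> B \<and> x = fst ab + snd ab"
      using ds unfolding internal_direct_sum_def by blast
    then have "\<exists>\<^sub>\<le>\<^sub>1ab. fst ab \<in> A \<and> snd ab \<in> B \<and> x = fst ab + snd ab"
      unfolding ex1_iff_ex_Uniq by (rule conjunct2)
    then have "(x, 0) = (0, x)"
      by (rule Uniq_D) (use that assms(1,2) in simp_all)
    then show "x = 0" by simp
  qed
  moreover have "\<exists>a\<in>A. \<exists>b\<in>B. m = a + b" for m
  proof -
    have "\<exists>ab. fst ab \<in> A \<and> snd ab \<in> B \<and> m = fst ab + snd ab"
      by (intro ex1_implies_ex) (rule ds[unfolded internal_direct_sum_def, rule_format])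
    then show ?thesis by blast
  qed
  ultimately show "(\<forall>m. \<exists>a\<in>A. \<exists>b\<in>B. m = a + b) \<and> A \<inter> B = {0}"
    using assms(1,2) by blast
next
  assume decomp: "(\<forall>m. \<exists>a\<in>A. \<exists>b\<in>B. m = a + b) \<and> A \<inter> B = {0}"
  show "internal_direct_sum A B"
    unfolding internal_direct_sum_def
  proof
    fix m
    obtain a b where ab: "a \<in> A" "b \<in> B" "m = a + b"
      using decomp by blast
    show "\<exists>!ab. fst ab \<in> A \<and> snd ab \<in> B \<and> m = fst ab + snd ab"
    proof (rule ex1I[of _ "(a, b)"])
      fix ab' assume ab': "fst ab' \<in> A \<and> snd ab' \<in> B \<and> m = fst ab' + snd ab'"
      have "fst ab' - a = b - snd ab'"
        using ab ab' by (simp add: algebra_simps)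
      moreover have "fst ab' - a \<in> A" and "b - snd ab' \<in> B"
        using ab ab' assms(3,4) by auto
      ultimately have "fst ab' - a \<in> A \<inter> B"
        by simp
      then have "fst ab' = a"
        using decomp by simp
      moreover then have "snd ab' = b"
        using ab ab' by simp
      ultimately show "ab' = (a, b)"
        by (simp add: prod_eq_iff)
    qed (use ab in simp)
  qed
qed

lemma S2_module_swap:
  assumes S: "S2_module p s t"
  shows "S2_module p t s"
proof -
  have s: "additive s" and t: "additive t" and st: "\<And>m. s (t m) = t (s m)"
    using S unfolding S2_module_def by auto
  have "(m - t m) - s (m - t m) = (m - s m) - t (m - s m)" for m
    using st by (simp add: additive_diff[OF s] additive_diff[OF t] algebra_simps)
  then show ?thesis
    using S unfolding S2_module_def by (simp add: add.commute)
qed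

lemma S2_one_minus_in_kerop: "S2_module p s t \<Longrightarrow> m - s m \<in> kerop t"
  unfolding S2_module_def kerop_def by blast

lemma S2_Nop_kerop_eq_0:
  assumes "S2_module p s t" "x \<in> kerop t"
  shows "Nop p s x = 0"
proof -
  have "Nop p s x + Nop p t x = natmult p x"
    using assms(1) unfolding S2_module_def by blast
  then show ?thesis
    using assms(2) by (simp add: kerop_iff Nop_fixpoint)
qed

lemma S2_funpow_kerop:
  assumes "S2_module p s t" "x \<in> kerop s"
  shows "(t ^^ p) x = x"
proof -
  have "additive t"
    using assms(1) unfolding S2_module_def by blast
  then show ?thesis
    using Nop_telescope[of t p x] S2_Nop_kerop_eq_0[OF S2_module_swap[OF assms(1)] assms(2)]
    by (simp add: additive_0)
qed

lemma S2_bij_betw_one_minus_if_bij_natmult: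
  fixes p :: nat and s t :: "'m::ab_group_add \<Rightarrow> 'm"
  assumes S: "S2_module p s t" and bij: "bij (natmult p :: 'm \<Rightarrow> 'm)"
  shows "bij_betw (\<lambda>m. m - s m) (kerop t) (kerop t)"
proof -
  have s: "additive s" and t: "additive t" and st: "\<And>m. s (t m) = t (s m)"
    using S unfolding S2_module_def by auto
  have natmult_cancel: "x = y" if "natmult p x = natmult p y" for x y :: 'm
    using bij that unfolding bij_def inj_def by blast
  define g where "g y = (\<Sum>i<p. Nop i s y)" for y
  have g: "additive g"
    unfolding additive_def g_def Nop_def
    by (simp add: additive_add[OF additive_funpow[OF s]] sum.distrib)
  have g_commute: "g (h y) = h (g y)" if "additive h" "\<And>y. h (s y) = s (h y)" for h y
    unfolding g_def using that by (simp add: additive_sum Nop_commute)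
  have g_s: "g (y - s y) = g y - s (g y)" for y
    using g_commute[OF s] by (simp add: additive_diff[OF g])
  have g_t: "g (y - t y) = g y - t (g y)" for y
    using g_commute[OF t] st by (simp add: additive_diff[OF g])
  have g_inverse: "g x - s (g x) = natmult p x" if "x \<in> kerop t" for x
    using sum_Nop_telescope[OF s, where n = p and y = x] S2_Nop_kerop_eq_0[OF S that]
    unfolding g_def by simp
  have "inj_on (\<lambda>m. m - s m) (kerop t)"
  proof (rule inj_onI)
    fix x y assume x: "x \<in> kerop t" and y: "y \<in> kerop t" and eq: "x - s x = y - s y"
    have "natmult p (x - y) = g ((x - y) - s (x - y))"
      using g_inverse[OF kerop_diff[OF t x y]] g_s by simp
    also have "(x - y) - s (x - y) = 0"
      using eq by (simp add: additive_diff[OF s] algebra_simps)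
    also have "g 0 = natmult p 0"
      by (simp add: additive_0[OF g] additive_0[OF natmult_additive])
    finally show "x = y"
      using natmult_cancel by fastforce
  qed
  moreover have "y \<in> (\<lambda>m. m - s m) ` kerop t" if y: "y \<in> kerop t" for y
  proof -
    obtain z where z: "natmult p z = g y"
      using bij unfolding bij_def surj_def by metis
    have "natmult p (z - t z) = natmult p 0"
      using z y g_t[of y] by (simp add: additive_diff[OF natmult_additive] additive_natmult[OF t, symmetric]
          kerop_iff additive_0[OF g] additive_0[OF natmult_additive])
    then have "z \<in> kerop t"
      using natmult_cancel unfolding kerop_def by blast
    moreover have "natmult p (z - s z) = natmult p y"
      using z g_inverse[OF y] by (simp add: additive_diff[OF natmult_additive] additive_natmult[OF s, symmetric])
    then have "y = z - s z"
      using natmult_cancel by metis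
    ultimately show ?thesis by blast
  qed
  ultimately show ?thesis
    unfolding bij_betw_def using S2_one_minus_in_kerop[OF S] by blast
qed

lemma S2_natmult_on_kerop:
  fixes p :: nat and s t :: "'m::ab_group_add \<Rightarrow> 'm"
  assumes S: "S2_module p s t" and p: "prime p"
    and bij: "bij_betw (\<lambda>m. m - t m) (kerop s) (kerop s)"
  shows "inj_on (natmult p) (kerop s)" and "kerop s \<subseteq> range (natmult p)"
proof -
  have s: "additive s" and t: "additive t"
    using S unfolding S2_module_def by auto
  define c where "c m = t m - m" for m
  have c: "additive c"
    unfolding c_def additive_def by (simp add: additive_add[OF t])
  obtain F where F: "additive F" and binomial: "\<And>x. (t ^^ p) x = x + (c ^^ p) x + natmult p (F x)"
    using funpow_binomial_prime[OF p c] unfolding c_def by auto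
  have c_power: "(c ^^ p) x = - F (natmult p x)" if "x \<in> kerop s" for x
    using binomial[of x] S2_funpow_kerop[OF S that] additive_natmult[OF F]
    by (simp add: add.assoc add_eq_0_iff2)
  have "bij_betw uminus (kerop s) (kerop s)"
    by (rule bij_betw_byWitness[of _ uminus]) (auto simp: kerop_iff additive_uminus[OF s])
  with bij have "bij_betw (uminus \<circ> (\<lambda>m. m - t m)) (kerop s) (kerop s)"
    by (rule bij_betw_trans)
  moreover have "uminus \<circ> (\<lambda>m. m - t m) = c"
    by (simp add: c_def fun_eq_iff)
  ultimately have "bij_betw c (kerop s) (kerop s)"
    by simp
  then have c_power_bij: "bij_betw (c ^^ p) (kerop s) (kerop s)"
    by (rule bij_betw_funpow)
  show "inj_on (natmult p) (kerop s)"
  proof (rule inj_onI)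
    fix x y assume x: "x \<in> kerop s" and y: "y \<in> kerop s" and eq: "natmult p x = natmult p y"
    have "(c ^^ p) x = (c ^^ p) y"
      using c_power[OF x] c_power[OF y] eq by simp
    then show "x = y"
      using c_power_bij x y unfolding bij_betw_def inj_on_def by blast
  qed
  show "kerop s \<subseteq> range (natmult p)"
  proof
    fix y assume "y \<in> kerop s"
    then obtain z where z: "z \<in> kerop s" and y: "y = (c ^^ p) z"
      using c_power_bij bij_betw_imp_surj_on by blast
    have "y = natmult p (- F z)"
      using c_power[OF z] y additive_natmult[OF F] by (simp add: additive_uminus[OF natmult_additive])
    then show "y \<in> range (natmult p)" by blast
  qed
qed

lemma S2_kerop_sum:
  assumes S: "S2_module p s t" and onto: "kerop t \<subseteq> (\<lambda>m. m - s m) ` kerop t"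
  shows "\<exists>u\<in>kerop s. \<exists>v\<in>kerop t. m = u + v"
proof -
  have s: "additive s"
    using S unfolding S2_module_def by blast
  obtain v where v: "v \<in> kerop t" and eq: "m - s m = v - s v"
    using onto S2_one_minus_in_kerop[OF S, of m] by blast
  have "m - v \<in> kerop s"
    using eq by (simp add: kerop_iff additive_diff[OF s] algebra_simps)
  then show ?thesis
    using v by (metis diff_add_cancel)
qed

lemma S2_image_one_minus_kerop:
  assumes S: "S2_module p s t" and sum: "\<And>m. \<exists>u\<in>kerop s. \<exists>v\<in>kerop t. m = u + v"
  shows "(\<lambda>m. m - t m) ` kerop s = imop t"
proof
  show "(\<lambda>m. m - t m) ` kerop s \<subseteq> imop t"
    unfolding imop_def by blast
  show "imop t \<subseteq> (\<lambda>m. m - t m) ` kerop s"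
  proof
    fix y assume "y \<in> imop t"
    then obtain m where y: "y = m - t m"
      unfolding imop_def by blast
    obtain u v where u: "u \<in> kerop s" and v: "v \<in> kerop t" and m: "m = u + v"
      using sum by blast
    have t: "additive t"
      using S unfolding S2_module_def by blast
    have "y = u - t u"
      using y m v by (simp add: additive_add[OF t] kerop_iff)
    then show "y \<in> (\<lambda>m. m - t m) ` kerop s"
      using u by blast
  qed
qed

lemma S2_bij_betw_one_minus_iff:
  assumes S: "S2_module p s t" and sum: "\<And>m. \<exists>u\<in>kerop s. \<exists>v\<in>kerop t. m = u + v"
  shows "bij_betw (\<lambda>m. m - t m) (kerop s) (kerop s) \<longleftrightarrow>
    kerop s \<inter> kerop t = {0} \<and> imop t = kerop s"
proof -
  have "additive s" "additive t"
    using S unfolding S2_module_def by auto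
  then show ?thesis
    unfolding bij_betw_def
    by (simp add: inj_on_one_minus_kerop_iff S2_image_one_minus_kerop[OF S sum])
qed

lemma S2_bij_betw_one_minus_iff_cohom_trivial:
  assumes S: "S2_module p s t"
  shows "bij_betw (\<lambda>m. m - s m) (kerop t) (kerop t) \<and> bij_betw (\<lambda>m. m - t m) (kerop s) (kerop s)
    \<longleftrightarrow> cohom_trivial s t \<and> internal_direct_sum (kerop s) (kerop t)"
proof -
  have s: "additive s" and t: "additive t"
    using S unfolding S2_module_def by auto
  have direct_sum: "internal_direct_sum (kerop s) (kerop t) \<longleftrightarrow>
      (\<forall>m. \<exists>u\<in>kerop s. \<exists>v\<in>kerop t. m = u + v) \<and> kerop s \<inter> kerop t = {0}"
    by (rule internal_direct_sum_iff) (simp_all add: zero_in_kerop kerop_diff s t)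
  show ?thesis
  proof (cases "\<forall>m. \<exists>u\<in>kerop s. \<exists>v\<in>kerop t. m = u + v")
    case True
    then have "\<forall>m. \<exists>v\<in>kerop t. \<exists>u\<in>kerop s. m = v + u"
      by (metis add.commute)
    then have "bij_betw (\<lambda>m. m - s m) (kerop t) (kerop t) \<longleftrightarrow>
        kerop t \<inter> kerop s = {0} \<and> imop s = kerop t"
      by (intro S2_bij_betw_one_minus_iff[OF S2_module_swap[OF S]]) blast
    moreover have "bij_betw (\<lambda>m. m - t m) (kerop s) (kerop s) \<longleftrightarrow>
        kerop s \<inter> kerop t = {0} \<and> imop t = kerop s"
      using True by (intro S2_bij_betw_one_minus_iff[OF S]) blast
    ultimately show ?thesis
      using True direct_sum unfolding cohom_trivial_def by (auto simp: Int_commute)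
  next
    case False
    have "\<not> bij_betw (\<lambda>m. m - s m) (kerop t) (kerop t)"
    proof
      assume "bij_betw (\<lambda>m. m - s m) (kerop t) (kerop t)"
      then have "kerop t \<subseteq> (\<lambda>m. m - s m) ` kerop t"
        by (simp add: bij_betw_imp_surj_on)
      then show False
        using False S2_kerop_sum[OF S] by blast
    qed
    then show ?thesis
      using False direct_sum by simp
  qed
qed

lemma S2_bij_natmult_if_bij_betw_one_minus:
  fixes p :: nat and s t :: "'m::ab_group_add \<Rightarrow> 'm"
  assumes S: "S2_module p s t" and p: "prime p"
    and bij_s: "bij_betw (\<lambda>m. m - s m) (kerop t) (kerop t)"
    and bij_t: "bij_betw (\<lambda>m. m - t m) (kerop s) (kerop s)"
  shows "bij (natmult p :: 'm \<Rightarrow> 'm)"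
proof (rule bijI)
  have s: "additive s" and t: "additive t"
    using S unfolding S2_module_def by auto
  have sum: "\<exists>u\<in>kerop s. \<exists>v\<in>kerop t. m = u + v" for m
    by (rule S2_kerop_sum[OF S]) (simp add: bij_betw_imp_surj_on[OF bij_s])
  have disjoint: "kerop s \<inter> kerop t = {0}"
    using bij_t inj_on_one_minus_kerop_iff[OF s t] unfolding bij_betw_def by blast
  note on_s = S2_natmult_on_kerop[OF S p bij_t]
    and on_t = S2_natmult_on_kerop[OF S2_module_swap[OF S] p bij_s]
  have natmult_0: "natmult p 0 = (0::'m)"
    by (rule additive_0[OF natmult_additive])
  show "inj (natmult p :: 'm \<Rightarrow> 'm)"
  proof (rule injI)
    fix x y :: 'm assume eq: "natmult p x = natmult p y"
    obtain u v where u: "u \<in> kerop s" and v: "v \<in> kerop t" and uv: "x - y = u + v"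
      using sum by blast
    have "natmult p u + natmult p v = natmult p (x - y)"
      using uv by (simp add: additive_add[OF natmult_additive])
    also have "\<dots> = 0"
      using eq by (simp add: additive_diff[OF natmult_additive])
    finally have "natmult p u = - natmult p v"
      by (simp add: eq_neg_iff_add_eq_0)
    moreover have "natmult p u \<in> kerop s" "natmult p v \<in> kerop t"
      using u v by (simp_all add: kerop_natmult s t)
    moreover have "- natmult p v \<in> kerop t"
      using kerop_diff[OF t zero_in_kerop[OF t] \<open>natmult p v \<in> kerop t\<close>] by simp
    ultimately have "natmult p u \<in> kerop s \<inter> kerop t"
      by simp
    then have "natmult p u = 0" "natmult p v = 0"
      using disjoint \<open>natmult p u = - natmult p v\<close> by auto
    then have "u = 0" "v = 0"
      using inj_onD[OF on_s(1) _ u zero_in_kerop[OF s]] inj_onD[OF on_t(1) _ v zero_in_kerop[OF t]]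
      by (simp_all add: natmult_0)
    then show "x = y"
      using uv by simp
  qed
  have "m \<in> range (natmult p)" for m :: 'm
  proof -
    obtain u v where u: "u \<in> kerop s" and v: "v \<in> kerop t" and m: "m = u + v"
      using sum by blast
    obtain u' v' where "u = natmult p u'" and "v = natmult p v'"
      using on_s(2) on_t(2) u v by blast
    then have "m = natmult p (u' + v')"
      using m by (simp add: additive_add[OF natmult_additive])
    then show ?thesis by blast
  qed
  then show "surj (natmult p :: 'm \<Rightarrow> 'm)"
    by blast
qed

theorem proposition7p7:
  fixes p :: nat and s t :: "'m::ab_group_add \<Rightarrow> 'm"
  assumes "prime p" and "S2_module p s t"
  shows "(uniquely_divisible p TYPE('m) \<longleftrightarrow>
            cohom_trivial s t \<and> internal_direct_sum (kerop s) (kerop t))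
       \<and> (uniquely_divisible p TYPE('m) \<longleftrightarrow>
            bij_betw (\<lambda>m. m - s m) (kerop t) (kerop t) \<and>
            bij_betw (\<lambda>m. m - t m) (kerop s) (kerop s))"
proof -
  have "uniquely_divisible p TYPE('m) \<longleftrightarrow>
      bij_betw (\<lambda>m. m - s m) (kerop t) (kerop t) \<and> bij_betw (\<lambda>m. m - t m) (kerop s) (kerop s)"
    unfolding uniquely_divisible_def
    using S2_bij_betw_one_minus_if_bij_natmult[OF assms(2)]
      S2_bij_betw_one_minus_if_bij_natmult[OF S2_module_swap[OF assms(2)]]
      S2_bij_natmult_if_bij_betw_one_minus[OF assms(2,1)]
    by auto
  then show ?thesis
    using S2_bij_betw_one_minus_iff_cohom_trivial[OF assms(2)] by simp
qed

end
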